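(* Over pairs of integers $n,m\ge 2$ with $n,m\to\infty$, \[ \liminf_{n,m\to\infty}\frac{\gamma_{2t}(K_n\Box K_m)}{\min\{n,m\}}=\frac32\qquad\text{and}\qquad\limsup_{n,m\to\infty}\frac{\gamma_{2t}(K_n\Box K_m)}{\min\{n,m\}}=2. \] Furthermore, for every real number $\alpha$ with $\frac32\le\alpha\le 2$ there exists a sequence of pairs of integers $(n_k,m_k)$, $k=1,2,\dots$, with $n_k,m_k\ge 2$, such that \[ \lim_{k\to\infty}\frac{\gamma_{2t}(K_{n_k}\Box K_{m_k})}{\min\{n_k,m_k\}}=\alpha. \]
   Context: For a graph $G=(V,E)$, a set $S\subseteq V$ is a total $2$-dominating set if every vertex of $V$ (including those in $S$) is adjacent to at least $2$ vertices of $S$; $\gamma_{2t}(G)$ is the minimum cardinality of such a set. $G\Box H$ denotes the Cartesian product: vertex set $V(G)\times V(H)$, with $(u_1,v_1)\sim(u_2,v_2)$ iff either $u_1=u_2$ and $v_1\sim v_2$, or $v_1=v_2$ and $u_1\sim u_2$. $K_n$ is the complete graph on $n$ vertices. *)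

theory Defs
  imports "HOL-Library.Extended_Real" "HOL-Library.Liminf_Limsup"
begin

definition total_2_dominating :: "'a set \<Rightarrow> ('a \<Rightarrow> 'a \<Rightarrow> bool) \<Rightarrow> 'a set \<Rightarrow> bool" where
  "total_2_dominating V adj S \<longleftrightarrow>
     S \<subseteq> V \<and> (\<forall>v\<in>V. card {u \<in> S. adj v u} \<ge> 2)"

definition gamma_2t :: "'a set \<Rightarrow> ('a \<Rightarrow> 'a \<Rightarrow> bool) \<Rightarrow> nat" where
  "gamma_2t V adj = (LEAST k. \<exists>S. total_2_dominating V adj S \<and> card S = k)"

definition K_vert :: "nat \<Rightarrow> nat set" where
  "K_vert n = {0..<n}"

definition K_adj :: "nat \<Rightarrow> nat \<Rightarrow> bool" where
  "K_adj u v \<longleftrightarrow> u \<noteq> v"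

definition cart_adj :: "('a \<Rightarrow> 'a \<Rightarrow> bool) \<Rightarrow> ('b \<Rightarrow> 'b \<Rightarrow> bool) \<Rightarrow> 'a \<times> 'b \<Rightarrow> 'a \<times> 'b \<Rightarrow> bool" where
  "cart_adj adjG adjH x y \<longleftrightarrow>
     (fst x = fst y \<and> adjH (snd x) (snd y)) \<or> (snd x = snd y \<and> adjG (fst x) (fst y))"

definition gamma_2t_KK :: "nat \<Rightarrow> nat \<Rightarrow> nat" where
  "gamma_2t_KK n m = gamma_2t (K_vert n \<times> K_vert m) (cart_adj K_adj K_adj)"

definition ratio_KK :: "nat \<Rightarrow> nat \<Rightarrow> real" where
  "ratio_KK n m = real (gamma_2t_KK n m) / real (min n m)"

end

theory Submission
  imports Defs
begin

(* K_n \<box> K_m is the n \<times> m rook's graph: a cell v sees r + c - 2[v \<in> S] cells of S, where r and c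
   count the cells of S in the row and column of v. So S is total 2-dominating iff r + c \<ge> 2 off S
   and r + c \<ge> 4 on S. If some row misses S, every column holds two cells of S and |S| \<ge> 2m
   (symmetrically 2n); otherwise double counting gives n + m = \<Sum>x\<in>S. 1/r(x) + 1/c(x) \<le> 4|S|/3.
   Two full columns give the upper bound 2 min(n, m). For b \<le> a \<le> 3b a "staircase" of a row
   triples and b column triples shows that the lower bound 3(a + b) is attained on
   K_(a+3b) \<box> K_(3a+b); the resulting ratios 3(a + b)/(a + 3b) fill [3/2, 2] as a/b ranges over
   [1, 3], so every point of that interval is a limit along pairs tending to infinity. *)

lemma inverse_add_inverse_le_four_thirds:
  fixes r c :: real
  assumes "1 \<le> r" "1 \<le> c" "4 \<le> r + c"
  shows "1 / r + 1 / c \<le> 4 / 3"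
proof -
  have "0 \<le> (r - 1) * (c - 1)" using assms by simp
  then have "r + c - 1 \<le> r * c" by (simp add: algebra_simps)
  then have "3 * (r + c) \<le> 4 * (r * c)" using assms by argo
  then show ?thesis using assms by (simp add: field_simps)
qed

lemma card_eq_sum_card_fibres:
  assumes "finite S" "finite J" "f ` S \<subseteq> J"
  shows "card S = (\<Sum>j\<in>J. card {x \<in> S. f x = j})"
  using sum.group[OF assms, of "\<lambda>_. 1::nat"] by simp

lemma sum_inverse_card_fibres:
  assumes "finite S"
  shows "(\<Sum>x\<in>S. 1 / real (card {y \<in> S. f y = f x})) = card (f ` S)"
proof -
  have "(\<Sum>x\<in>S. 1 / real (card {y \<in> S. f y = f x})) =
        (\<Sum>j\<in>f ` S. \<Sum>x\<in>{x \<in> S. f x = j}. 1 / real (card {y \<in> S. f y = f x}))"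
    by (rule sum.group[symmetric]) (use assms in auto)
  also have "\<dots> = (\<Sum>j\<in>f ` S. \<Sum>x\<in>{x \<in> S. f x = j}. 1 / real (card {y \<in> S. f y = j}))"
    by (intro sum.cong) auto
  also have "\<dots> = (\<Sum>j\<in>f ` S. 1)"
  proof (rule sum.cong)
    fix j assume "j \<in> f ` S"
    then have "card {y \<in> S. f y = j} \<noteq> 0" using assms by auto
    then show "(\<Sum>x\<in>{x \<in> S. f x = j}. 1 / real (card {y \<in> S. f y = j})) = 1" by simp
  qed simp
  finally show ?thesis by simp
qed

lemma LIMSEQ_floor_mult_div:
  fixes t :: real
  shows "(\<lambda>k. of_int \<lfloor>t * real (Suc k)\<rfloor> / real (Suc k)) \<longlonglongrightarrow> t"
proof (rule tendsto_sandwich)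
  have "t - 1 / real (Suc k) \<le> of_int \<lfloor>t * real (Suc k)\<rfloor> / real (Suc k) \<and>
        of_int \<lfloor>t * real (Suc k)\<rfloor> / real (Suc k) \<le> t" for k
  proof -
    have "t * real (Suc k) - 1 \<le> of_int \<lfloor>t * real (Suc k)\<rfloor>"
      "of_int \<lfloor>t * real (Suc k)\<rfloor> \<le> t * real (Suc k)"
      by linarith+
    then show ?thesis by (simp add: le_divide_eq divide_le_eq left_diff_distrib del: of_nat_Suc)
  qed
  then show "\<forall>\<^sub>F k in sequentially. t - 1 / real (Suc k) \<le> of_int \<lfloor>t * real (Suc k)\<rfloor> / real (Suc k)"
    "\<forall>\<^sub>F k in sequentially. of_int \<lfloor>t * real (Suc k)\<rfloor> / real (Suc k) \<le> t"
    by simp_all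
  show "(\<lambda>k. t) \<longlonglongrightarrow> t" by simp
  show "(\<lambda>k. t - 1 / real (Suc k)) \<longlonglongrightarrow> t"
    using tendsto_diff[OF tendsto_const LIMSEQ_inverse_real_of_nat] by (simp add: inverse_eq_divide)
qed

lemma Liminf_antimono_filter:
  "G \<le> F \<Longrightarrow> Liminf F f \<le> Liminf G f"
  unfolding Liminf_def by (rule SUP_subset_mono) (auto simp: le_filter_def)

lemma Limsup_mono_filter:
  "G \<le> F \<Longrightarrow> Limsup G f \<le> Limsup F f"
  unfolding Limsup_def by (rule INF_superset_mono) (auto simp: le_filter_def)

lemma Liminf_le_sequence_limit_le_Limsup:
  fixes f :: "'a \<Rightarrow> 'b :: {complete_linorder, linorder_topology}"
  assumes "filterlim g F sequentially" "(\<lambda>k. f (g k)) \<longlonglongrightarrow> l"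
  shows "Liminf F f \<le> l" "l \<le> Limsup F f"
proof -
  have "Liminf F f \<le> Liminf (filtermap g sequentially) f"
    using assms(1) unfolding filterlim_def by (rule Liminf_antimono_filter)
  also have "\<dots> \<le> Liminf sequentially (\<lambda>k. f (g k))" by (rule Liminf_filtermap_le)
  also have "\<dots> = l" using assms(2) by (simp add: lim_imp_Liminf)
  finally show "Liminf F f \<le> l" .
  have "l = Limsup sequentially (\<lambda>k. f (g k))" using assms(2) by (simp add: lim_imp_Limsup)
  also have "\<dots> \<le> Limsup (filtermap g sequentially) f" by (rule Limsup_filtermap_ge)
  also have "\<dots> \<le> Limsup F f"
    using assms(1) unfolding filterlim_def by (rule Limsup_mono_filter)
  finally show "l \<le> Limsup F f" .
qed

definition row_card :: "('a \<times> 'b) set \<Rightarrow> 'a \<Rightarrow> nat" where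
  "row_card S i = card {x \<in> S. fst x = i}"

definition col_card :: "('a \<times> 'b) set \<Rightarrow> 'b \<Rightarrow> nat" where
  "col_card S j = card {x \<in> S. snd x = j}"

abbreviation rook_adj :: "nat \<times> nat \<Rightarrow> nat \<times> nat \<Rightarrow> bool" where
  "rook_adj \<equiv> cart_adj K_adj K_adj"

abbreviation rook_vert :: "nat \<Rightarrow> nat \<Rightarrow> (nat \<times> nat) set" where
  "rook_vert n m \<equiv> K_vert n \<times> K_vert m"

lemma row_card_pos_iff:
  assumes "finite S"
  shows "0 < row_card S i \<longleftrightarrow> i \<in> fst ` S"
  unfolding row_card_def card_gt_0_iff using assms by force

lemma col_card_pos_iff:
  assumes "finite S"
  shows "0 < col_card S j \<longleftrightarrow> j \<in> snd ` S"
  unfolding col_card_def card_gt_0_iff using assms by force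

lemma row_card_swap: "row_card (prod.swap ` S) = col_card S"
proof
  fix i
  have "{x \<in> prod.swap ` S. fst x = i} = prod.swap ` {x \<in> S. snd x = i}" by auto
  then show "row_card (prod.swap ` S) i = col_card S i"
    unfolding row_card_def col_card_def by (simp add: card_image)
qed

lemma col_card_swap: "col_card (prod.swap ` S) = row_card S"
  using row_card_swap[of "prod.swap ` S"] by (simp add: image_image)

lemma card_rook_neighbours:
  assumes "finite S"
  shows "card {u \<in> S. rook_adj v u} =
           row_card S (fst v) + col_card S (snd v) - (if v \<in> S then 2 else 0)"
proof -
  let ?R = "{x \<in> S. fst x = fst v}" and ?C = "{x \<in> S. snd x = snd v}"
  have "{u \<in> S. rook_adj v u} = (?R - {v}) \<union> (?C - {v})"
    unfolding cart_adj_def K_adj_def by (auto simp: prod_eq_iff)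
  moreover have "(?R - {v}) \<inter> (?C - {v}) = {}" by (auto simp: prod_eq_iff)
  ultimately have "card {u \<in> S. rook_adj v u} = card (?R - {v}) + card (?C - {v})"
    using assms by (simp add: card_Un_disjoint)
  moreover have "v \<in> S \<Longrightarrow> 1 \<le> card ?R \<and> 1 \<le> card ?C"
    using row_card_pos_iff[OF assms, of "fst v"] col_card_pos_iff[OF assms, of "snd v"]
    unfolding row_card_def col_card_def by (simp add: Suc_le_eq)
  ultimately show ?thesis
    using assms unfolding row_card_def col_card_def by (auto simp: card_Diff_singleton)
qed

lemma total_2_dominating_rook_iff:
  assumes "finite S"
  shows "total_2_dominating V rook_adj S \<longleftrightarrow>
           S \<subseteq> V \<and> (\<forall>v\<in>V. (if v \<in> S then 4 else 2) \<le> row_card S (fst v) + col_card S (snd v))"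
  unfolding total_2_dominating_def card_rook_neighbours[OF assms] by auto

lemma total_2_dominating_rook_finite:
  assumes "total_2_dominating (rook_vert n m) rook_adj S"
  shows "S \<subseteq> rook_vert n m" "finite S"
  using assms finite_subset unfolding total_2_dominating_def K_vert_def by auto

lemma total_2_dominating_swap:
  assumes "total_2_dominating (rook_vert n m) rook_adj S"
  shows "total_2_dominating (rook_vert m n) rook_adj (prod.swap ` S)"
proof -
  note S = total_2_dominating_rook_finite[OF assms]
  have "prod.swap v \<in> S \<longleftrightarrow> v \<in> prod.swap ` S" for v :: "nat \<times> nat"
    by (metis image_eqI swap_simp swap_swap prod.collapse imageE)
  then show ?thesis
    using assms S unfolding total_2_dominating_rook_iff[OF S(2)]
      total_2_dominating_rook_iff[OF finite_imageI[OF S(2)]]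
    by (auto simp: row_card_swap col_card_swap add.commute)
qed

lemma gamma_2t_KK_commute: "gamma_2t_KK n m = gamma_2t_KK m n"
proof -
  have "\<exists>S. total_2_dominating (rook_vert m n) rook_adj S \<and> card S = k"
    if "total_2_dominating (rook_vert n m) rook_adj S" "card S = k" for n m k S
    using that by (intro exI[of _ "prod.swap ` S"]) (simp add: total_2_dominating_swap card_image)
  then have "(\<exists>S. total_2_dominating (rook_vert n m) rook_adj S \<and> card S = k) \<longleftrightarrow>
             (\<exists>S. total_2_dominating (rook_vert m n) rook_adj S \<and> card S = k)" for k
    by blast
  then show ?thesis unfolding gamma_2t_KK_def gamma_2t_def by simp
qed

lemma two_mul_le_card_if_row_empty:
  assumes S: "total_2_dominating (rook_vert n m) rook_adj S"
    and i: "i < n" "i \<notin> fst ` S"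
  shows "2 * m \<le> card S"
proof -
  note fin = total_2_dominating_rook_finite[OF S]
  have "2 \<le> col_card S j" if "j < m" for j
  proof -
    have "(i, j) \<notin> S" "row_card S i = 0"
      using i row_card_pos_iff[OF fin(2)] by force+
    then show ?thesis
      using S i that unfolding total_2_dominating_rook_iff[OF fin(2)] K_vert_def by force
  qed
  then have "2 * m \<le> (\<Sum>j<m. col_card S j)"
    using sum_mono[of "{..<m}" "\<lambda>_. 2::nat" "col_card S"] by simp
  also have "\<dots> = card S"
    using card_eq_sum_card_fibres[OF fin(2), of "{..<m}" snd] fin(1)
    unfolding col_card_def K_vert_def by fastforce
  finally show ?thesis .
qed

lemma four_mul_card_ge_if_lines_met:
  assumes S: "total_2_dominating (rook_vert n m) rook_adj S"
    and rows: "fst ` S = K_vert n" and cols: "snd ` S = K_vert m"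
  shows "3 * (n + m) \<le> 4 * card S"
proof -
  note fin = total_2_dominating_rook_finite[OF S]
  have "real n + real m = (\<Sum>x\<in>S. 1 / real (row_card S (fst x)) + 1 / real (col_card S (snd x)))"
    using sum_inverse_card_fibres[OF fin(2), of fst] sum_inverse_card_fibres[OF fin(2), of snd]
    unfolding row_card_def col_card_def rows cols K_vert_def by (simp add: sum.distrib)
  also have "\<dots> \<le> (\<Sum>x\<in>S. 4 / 3)"
  proof (rule sum_mono)
    fix x assume x: "x \<in> S"
    have "(if x \<in> S then 4 else 2) \<le> row_card S (fst x) + col_card S (snd x)"
      using S x fin unfolding total_2_dominating_rook_iff[OF fin(2)] by blast
    moreover have "0 < row_card S (fst x)" "0 < col_card S (snd x)"
      using x row_card_pos_iff[OF fin(2)] col_card_pos_iff[OF fin(2)] by auto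
    ultimately
    show "1 / real (row_card S (fst x)) + 1 / real (col_card S (snd x)) \<le> 4 / 3"
      using x by (intro inverse_add_inverse_le_four_thirds) auto
  qed
  finally show ?thesis by simp
qed

lemma total_2_dominating_rook_card_lower:
  assumes S: "total_2_dominating (rook_vert n m) rook_adj S"
  shows "2 * m \<le> card S \<or> 2 * n \<le> card S \<or> 3 * (n + m) \<le> 4 * card S"
proof -
  note fin = total_2_dominating_rook_finite[OF S]
  consider i where "i < n" "i \<notin> fst ` S" | j where "j < m" "j \<notin> snd ` S"
    | "fst ` S = K_vert n" "snd ` S = K_vert m"
    using fin(1) unfolding K_vert_def by fastforce
  then show ?thesis
  proof cases
    case (1 i)
    then show ?thesis using two_mul_le_card_if_row_empty[OF S] by blast
  next
    case (2 j)
    then have "2 * n \<le> card (prod.swap ` S)"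
      by (intro two_mul_le_card_if_row_empty[OF total_2_dominating_swap[OF S]]) (auto simp: image_image)
    then show ?thesis by (simp add: card_image)
  next
    case 3
    then show ?thesis using four_mul_card_ge_if_lines_met[OF S] by blast
  qed
qed

lemma total_2_dominating_two_columns:
  assumes "2 \<le> n" "2 \<le> m"
  shows "total_2_dominating (rook_vert n m) rook_adj (K_vert n \<times> {0, 1})"
proof -
  let ?S = "K_vert n \<times> {0::nat, 1}"
  have "{x \<in> ?S. fst x = i} = {(i, 0), (i, 1)}" if "i < n" for i
    using that by (auto simp: K_vert_def)
  then have rows: "row_card ?S i = 2" if "i < n" for i
    using that unfolding row_card_def by simp
  have "{x \<in> ?S. snd x = j} = K_vert n \<times> {j}" if "j \<in> {0, 1}" for j
    using that by auto
  then have cols: "col_card ?S j = n" if "j \<in> {0, 1}" for j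
    using that unfolding col_card_def by (simp add: card_cartesian_product K_vert_def)
  have fin: "finite ?S" by (simp add: K_vert_def)
  have "?S \<subseteq> rook_vert n m" using assms by (auto simp: K_vert_def)
  moreover have "\<forall>v \<in> rook_vert n m. (if v \<in> ?S then 4 else 2) \<le> row_card ?S (fst v) + col_card ?S (snd v)"
    using assms rows cols by (auto simp: K_vert_def)
  ultimately show ?thesis unfolding total_2_dominating_rook_iff[OF fin] by blast
qed

lemma gamma_2t_KK_le:
  "total_2_dominating (rook_vert n m) rook_adj S \<Longrightarrow> gamma_2t_KK n m \<le> card S"
  unfolding gamma_2t_KK_def gamma_2t_def by (rule Least_le) blast

lemma gamma_2t_KK_attained:
  assumes "2 \<le> n" "2 \<le> m"
  obtains S where "total_2_dominating (rook_vert n m) rook_adj S" "card S = gamma_2t_KK n m"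
proof -
  have "\<exists>k S. total_2_dominating (rook_vert n m) rook_adj S \<and> card S = k"
    using total_2_dominating_two_columns[OF assms] by blast
  from LeastI_ex[OF this] show ?thesis
    using that unfolding gamma_2t_KK_def gamma_2t_def by blast
qed

lemma gamma_2t_KK_le_two_mul_min:
  assumes "2 \<le> n" "2 \<le> m"
  shows "gamma_2t_KK n m \<le> 2 * min n m"
proof -
  have "gamma_2t_KK n m \<le> 2 * n" if "2 \<le> n" "2 \<le> m" for n m
    using gamma_2t_KK_le[OF total_2_dominating_two_columns[OF that]]
    by (simp add: card_cartesian_product K_vert_def)
  from this[OF assms] this[of m n] assms show ?thesis
    unfolding gamma_2t_KK_commute[of m n] by (simp add: min_def)
qed

lemma gamma_2t_KK_lower:
  assumes "2 \<le> n" "2 \<le> m"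
  shows "2 * m \<le> gamma_2t_KK n m \<or> 2 * n \<le> gamma_2t_KK n m \<or> 3 * (n + m) \<le> 4 * gamma_2t_KK n m"
proof -
  obtain S where S: "total_2_dominating (rook_vert n m) rook_adj S" "card S = gamma_2t_KK n m"
    using gamma_2t_KK_attained[OF assms] .
  show ?thesis using total_2_dominating_rook_card_lower[OF S(1)] unfolding S(2) .
qed

lemma total_2_dominating_rook_if_lines_met:
  assumes S: "S \<subseteq> rook_vert n m" and rows: "fst ` S = K_vert n" and cols: "snd ` S = K_vert m"
    and three: "\<forall>x\<in>S. 3 \<le> row_card S (fst x) \<or> 3 \<le> col_card S (snd x)"
  shows "total_2_dominating (rook_vert n m) rook_adj S"
proof -
  have fin: "finite S" using S finite_subset by (auto simp: K_vert_def)
  show ?thesis unfolding total_2_dominating_rook_iff[OF fin]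
  proof (intro conjI ballI S)
    fix v assume "v \<in> rook_vert n m"
    then have "0 < row_card S (fst v)" "0 < col_card S (snd v)"
      using rows cols row_card_pos_iff[OF fin] col_card_pos_iff[OF fin] by auto
    then show "(if v \<in> S then 4 else 2) \<le> row_card S (fst v) + col_card S (snd v)"
      using three by auto
  qed
qed

(* Row i < a holds the cells in columns 3i, 3i+1, 3i+2; column 3a + k, k < b, holds the cells in
   rows a + 3k, a + 3k + 1, a + 3k + 2. *)
definition staircase :: "nat \<Rightarrow> nat \<Rightarrow> (nat \<times> nat) set" where
  "staircase a b = (\<lambda>j. (j div 3, j)) ` {..<3 * a} \<union> (\<lambda>i. (a + i, 3 * a + i div 3)) ` {..<3 * b}"

lemma staircase_row_cell:
  assumes "i < a" "t < 3"
  shows "(i, 3 * i + t) \<in> staircase a b"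
  unfolding staircase_def using assms by (intro UnI1 image_eqI[of _ _ "3 * i + t"]) auto

lemma staircase_col_cell:
  assumes "k < b" "t < 3"
  shows "(a + 3 * k + t, 3 * a + k) \<in> staircase a b"
  unfolding staircase_def using assms by (intro UnI2 image_eqI[of _ _ "3 * k + t"]) auto

lemma finite_staircase: "finite (staircase a b)"
  unfolding staircase_def by simp

lemma staircase_subset: "staircase a b \<subseteq> rook_vert (a + 3 * b) (3 * a + b)"
  unfolding staircase_def K_vert_def by auto

lemma fst_staircase: "fst ` staircase a b = K_vert (a + 3 * b)"
proof
  show "fst ` staircase a b \<subseteq> K_vert (a + 3 * b)" using staircase_subset[of a b] by fastforce
  show "K_vert (a + 3 * b) \<subseteq> fst ` staircase a b"
  proof
    fix i assume i: "i \<in> K_vert (a + 3 * b)"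
    show "i \<in> fst ` staircase a b"
    proof (cases "i < a")
      case True
      then show ?thesis using staircase_row_cell[of i a 0 b] by force
    next
      case False
      define k t where "k = (i - a) div 3" and "t = (i - a) mod 3"
      have "k < b" "t < 3" "i = a + 3 * k + t"
        using False i unfolding k_def t_def K_vert_def by auto
      then show ?thesis using staircase_col_cell[of k b t a] by force
    qed
  qed
qed

lemma snd_staircase: "snd ` staircase a b = K_vert (3 * a + b)"
proof
  show "snd ` staircase a b \<subseteq> K_vert (3 * a + b)" using staircase_subset[of a b] by fastforce
  show "K_vert (3 * a + b) \<subseteq> snd ` staircase a b"
  proof
    fix j assume j: "j \<in> K_vert (3 * a + b)"
    show "j \<in> snd ` staircase a b"
    proof (cases "j < 3 * a")
      case True
      then have "j div 3 < a" "j mod 3 < 3" "j = 3 * (j div 3) + j mod 3" by auto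
      then show ?thesis using staircase_row_cell[of "j div 3" a "j mod 3" b] by force
    next
      case False
      then have "j - 3 * a < b" "j = 3 * a + (j - 3 * a)" using j unfolding K_vert_def by auto
      then show ?thesis using staircase_col_cell[of "j - 3 * a" b 0 a] by force
    qed
  qed
qed

lemma card_staircase_le: "card (staircase a b) \<le> 3 * (a + b)"
proof -
  have "card (staircase a b) \<le> card {..<3 * a} + card {..<3 * b}"
    unfolding staircase_def by (intro card_Un_le[THEN order_trans] add_mono card_image_le) auto
  then show ?thesis by simp
qed

lemma staircase_three_in_line:
  assumes "x \<in> staircase a b"
  shows "3 \<le> row_card (staircase a b) (fst x) \<or> 3 \<le> col_card (staircase a b) (snd x)"
proof -
  let ?S = "staircase a b"
  have row3: "3 \<le> row_card ?S i" if "i < a" for i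
  proof -
    have "(\<lambda>t. (i, 3 * i + t)) ` {..<3} \<subseteq> {y \<in> ?S. fst y = i}"
      using staircase_row_cell[OF that] by auto
    then show ?thesis
      using card_inj_on_le[of "\<lambda>t. (i, 3 * i + t)" "{..<3}"] finite_staircase
      unfolding row_card_def by (simp add: inj_on_def)
  qed
  have col3: "3 \<le> col_card ?S (3 * a + k)" if "k < b" for k
  proof -
    have "(\<lambda>t. (a + 3 * k + t, 3 * a + k)) ` {..<3} \<subseteq> {y \<in> ?S. snd y = 3 * a + k}"
      using staircase_col_cell[OF that] by auto
    then show ?thesis
      using card_inj_on_le[of "\<lambda>t. (a + 3 * k + t, 3 * a + k)" "{..<3}"] finite_staircase
      unfolding col_card_def by (simp add: inj_on_def)
  qed
  from assms consider j where "j < 3 * a" "x = (j div 3, j)"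
    | i where "i < 3 * b" "x = (a + i, 3 * a + i div 3)"
    unfolding staircase_def by blast
  then show ?thesis
  proof cases
    case (1 j)
    then show ?thesis using row3[of "j div 3"] by simp
  next
    case (2 i)
    then show ?thesis using col3[of "i div 3"] by simp
  qed
qed

lemma total_2_dominating_staircase:
  "total_2_dominating (rook_vert (a + 3 * b) (3 * a + b)) rook_adj (staircase a b)"
  using staircase_subset fst_staircase snd_staircase staircase_three_in_line
  by (intro total_2_dominating_rook_if_lines_met) auto

lemma gamma_2t_KK_staircase:
  assumes "1 \<le> b" "b \<le> a" "a \<le> 3 * b"
  shows "gamma_2t_KK (a + 3 * b) (3 * a + b) = 3 * (a + b)"
proof (rule antisym)
  show "gamma_2t_KK (a + 3 * b) (3 * a + b) \<le> 3 * (a + b)"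
    using gamma_2t_KK_le[OF total_2_dominating_staircase] card_staircase_le order_trans by blast
  show "3 * (a + b) \<le> gamma_2t_KK (a + 3 * b) (3 * a + b)"
  proof -
    have "2 \<le> a + 3 * b" "2 \<le> 3 * a + b" using assms by linarith+
    from gamma_2t_KK_lower[OF this] show ?thesis using assms by arith
  qed
qed

lemma ratio_KK_staircase:
  assumes "1 \<le> b" "b \<le> a" "a \<le> 3 * b"
  shows "ratio_KK (a + 3 * b) (3 * a + b) = 3 * (real a + real b) / (real a + 3 * real b)"
proof -
  have "min (a + 3 * b) (3 * a + b) = a + 3 * b" using assms by simp
  then show ?thesis unfolding ratio_KK_def gamma_2t_KK_staircase[OF assms] by simp
qed

lemma ratio_KK_bounds:
  assumes "2 \<le> n" "2 \<le> m"
  shows "3 / 2 \<le> ratio_KK n m" "ratio_KK n m \<le> 2"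
proof -
  have "3 * min n m \<le> 2 * gamma_2t_KK n m"
    using gamma_2t_KK_lower[OF assms] by (auto simp: min_def)
  moreover have "gamma_2t_KK n m \<le> 2 * min n m"
    using gamma_2t_KK_le_two_mul_min[OF assms] .
  moreover have "0 < real (min n m)" using assms by simp
  ultimately show "3 / 2 \<le> ratio_KK n m" "ratio_KK n m \<le> 2"
    unfolding ratio_KK_def by (simp_all add: field_simps)
qed

lemma ratio_KK_limit_point:
  fixes \<alpha> :: real
  assumes "3 / 2 \<le> \<alpha>" "\<alpha> \<le> 2"
  obtains nk mk :: "nat \<Rightarrow> nat"
  where "\<forall>k. 2 \<le> nk k \<and> 2 \<le> mk k"
    and "filterlim (\<lambda>k. (nk k, mk k)) (at_top \<times>\<^sub>F at_top) sequentially"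
    and "(\<lambda>k. ratio_KK (nk k) (mk k)) \<longlonglongrightarrow> \<alpha>"
proof -
  define t where "t = (3 * \<alpha> - 3) / (3 - \<alpha>)"
  have t: "1 \<le> t" "t \<le> 3" "\<alpha> = 3 * (t + 1) / (t + 3)"
    using assms unfolding t_def by (simp_all add: field_simps)
  define a :: "nat \<Rightarrow> nat" where "a k = nat \<lfloor>t * real (Suc k)\<rfloor>" for k
  have a_real: "real (a k) = of_int \<lfloor>t * real (Suc k)\<rfloor>" for k
    using t unfolding a_def by simp
  have a_bounds: "Suc k \<le> a k \<and> a k \<le> 3 * Suc k" for k
  proof -
    have "real (Suc k) \<le> t * real (Suc k)" "t * real (Suc k) \<le> 3 * real (Suc k)"
      using t by (simp_all del: of_nat_Suc)
    then have "int (Suc k) \<le> \<lfloor>t * real (Suc k)\<rfloor>" "\<lfloor>t * real (Suc k)\<rfloor> \<le> int (3 * Suc k)"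
      by (simp_all only: le_floor_iff floor_le_iff of_int_of_nat_eq of_nat_mult)
    then show ?thesis unfolding a_def by linarith
  qed
  define nk mk where "nk k = a k + 3 * Suc k" and "mk k = 3 * a k + Suc k" for k
  define x where "x k = real (a k) / real (Suc k)" for k
  have "(\<lambda>k. 3 * (x k + 1) / (x k + 3)) \<longlonglongrightarrow> \<alpha>"
    unfolding t(3) x_def a_real using t by (intro tendsto_intros LIMSEQ_floor_mult_div) auto
  moreover have "ratio_KK (nk k) (mk k) = 3 * (x k + 1) / (x k + 3)" for k
  proof -
    have "real (a k) + real (Suc k) = (x k + 1) * real (Suc k)"
      "real (a k) + 3 * real (Suc k) = (x k + 3) * real (Suc k)"
      unfolding x_def by (simp_all add: field_simps del: of_nat_Suc)
    then show ?thesis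
      unfolding nk_def mk_def using ratio_KK_staircase[of "Suc k" "a k"] a_bounds[of k]
      by (simp del: of_nat_Suc)
  qed
  moreover have "filterlim (\<lambda>k. (nk k, mk k)) (at_top \<times>\<^sub>F at_top) sequentially"
    by (intro filterlim_Pair filterlim_at_top_mono[OF filterlim_ident]) (auto simp: nk_def mk_def)
  moreover have "\<forall>k. 2 \<le> nk k \<and> 2 \<le> mk k"
  proof
    fix k show "2 \<le> nk k \<and> 2 \<le> mk k" using a_bounds[of k] unfolding nk_def mk_def by linarith
  qed
  ultimately show ?thesis using that by simp
qed

theorem theorem18:
  shows "Liminf (at_top \<times>\<^sub>F at_top) (\<lambda>(n, m). ereal (ratio_KK n m)) = ereal (3/2) \<and>
         Limsup (at_top \<times>\<^sub>F at_top) (\<lambda>(n, m). ereal (ratio_KK n m)) = ereal 2 \<and>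
         (\<forall>\<alpha>::real. 3/2 \<le> \<alpha> \<and> \<alpha> \<le> 2 \<longrightarrow>
           (\<exists>nk mk :: nat \<Rightarrow> nat. (\<forall>k. nk k \<ge> 2 \<and> mk k \<ge> 2) \<and>
             (\<lambda>k. ratio_KK (nk k) (mk k)) \<longlonglongrightarrow> \<alpha>))"
proof -
  let ?F = "at_top \<times>\<^sub>F at_top :: (nat \<times> nat) filter"
  let ?f = "\<lambda>(n, m). ereal (ratio_KK n m)"
  have "\<forall>\<^sub>F p in ?F. ereal (3/2) \<le> ?f p \<and> ?f p \<le> ereal 2"
    unfolding eventually_prod_sequentially using ratio_KK_bounds by (intro exI[of _ 2]) auto
  then have bounds: "ereal (3/2) \<le> Liminf ?F ?f" "Limsup ?F ?f \<le> ereal 2"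
    by (auto intro: Liminf_bounded Limsup_bounded elim: eventually_mono)
  have limit_point: "Liminf ?F ?f \<le> ereal \<alpha> \<and> ereal \<alpha> \<le> Limsup ?F ?f"
    if \<alpha>: "3/2 \<le> \<alpha>" "\<alpha> \<le> 2" for \<alpha>
  proof -
    obtain nk mk where "filterlim (\<lambda>k. (nk k, mk k)) ?F sequentially"
      "(\<lambda>k. ratio_KK (nk k) (mk k)) \<longlonglongrightarrow> \<alpha>"
      using ratio_KK_limit_point[OF \<alpha>] by blast
    then show ?thesis
      using Liminf_le_sequence_limit_le_Limsup[of "\<lambda>k. (nk k, mk k)" ?F ?f "ereal \<alpha>"]
      by (simp add: tendsto_ereal)
  qed
  show ?thesis
  proof (intro conjI allI impI)
    show "Liminf ?F ?f = ereal (3/2)" using bounds(1) limit_point[of "3/2"] by simp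
    show "Limsup ?F ?f = ereal 2" using bounds(2) limit_point[of 2] by simp
    show "\<exists>nk mk. (\<forall>k. nk k \<ge> 2 \<and> mk k \<ge> 2) \<and> (\<lambda>k. ratio_KK (nk k) (mk k)) \<longlonglongrightarrow> \<alpha>"
      if "3/2 \<le> \<alpha> \<and> \<alpha> \<le> 2" for \<alpha>
      using ratio_KK_limit_point that by metis
  qed
qed

end
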